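(* Let $\Omega=\{1,\dots,n\}$ and let $p,q\in\Delta_n=\{r\in\mathbb{R}^n: r\ge 0,\ \sum_i r_i=1\}$. Fix weights $\sigma_1,\dots,\sigma_n\ge 0$ and set $\Sigma=\mathrm{Diag}\{\sigma_1,\dots,\sigma_n\}$. Let $E,E'$ be two disjoint sets of $L$ observations each, drawn i.i.d. from $p$, and $F,F'$ two disjoint sets of $R$ observations each, drawn i.i.d. from $q$, all four sets being mutually independent. Put $\gamma=R/(L+R)$, $\bar\gamma=1-\gamma=L/(L+R)$, $M=2LR/(L+R)$. Let $\omega,\omega',\zeta,\zeta'\in\Delta_n$ be the empirical distributions of $E,E',F,F'$ respectively, let $$\chi=(\omega-\zeta)^T\Sigma(\omega'-\zeta')=\sum_{i=1}^n\sigma_i(\omega_i-\zeta_i)(\omega'_i-\zeta'_i),$$ and let the test $\mathcal T$ claim a difference ($H_1$) if and only if $|\chi|>\ell$. Suppose the threshold satisfies $$\ell\ge 2\sqrt2\,\theta M^{-1}\sqrt{\textstyle\sum_i\sigma_i^2p_i^2}$$ for some $\theta\ge1$. Then: (1) if $p=q$, the probability that $\mathcal T$ claims $H_1$ is at most $1/\theta^2$; (2) if $$\sum_i\sigma_i(p_i-q_i)^2>\ell+2\sqrt2\,\theta\Big[M^{-1/2}\sqrt{\textstyle\sum_i\sigma_i^2(p_i-q_i)^2(\gamma p_i+\bar\gamma q_i)}+M^{-1}\sqrt{\gamma\textstyle\sum_i\sigma_i^2p_i^2+\bar\gamma\sum_i\sigma_i^2q_i^2}\Big],$$ then the probability that $\mathcal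 T$ claims $H_1$ is at least $1-3/\theta^2$.
   Context: The empirical distribution of a finite set of observations with values in $\{1,\dots,n\}$ is the vector in $\Delta_n$ whose $i$-th entry is the fraction of observations equal to $i$. *)

theory Defs
  imports "HOL-Probability.Probability"
begin

text \<open>Probability prob_simplex Delta_n, vectors indexed by 1..n (values outside are irrelevant).\<close>
definition prob_simplex :: "nat \<Rightarrow> (nat \<Rightarrow> real) set" where
  "prob_simplex n = {r. (\<forall>i\<in>{1..n}. r i \<ge> 0) \<and> (\<Sum>i=1..n. r i) = 1}"

definition cat_pmf :: "nat \<Rightarrow> (nat \<Rightarrow> real) \<Rightarrow> nat pmf" where
  "cat_pmf n p = embed_pmf (\<lambda>i. if i \<in> {1..n} then p i else 0)"

definition sample_pmf :: "nat \<Rightarrow> 'a pmf \<Rightarrow> (nat \<Rightarrow> 'a) pmf" where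
  "sample_pmf L D = Pi_pmf {..<L} undefined (\<lambda>_. D)"

definition empirical :: "nat \<Rightarrow> (nat \<Rightarrow> nat) \<Rightarrow> nat \<Rightarrow> real" where
  "empirical L X i = real (card {k\<in>{..<L}. X k = i}) / real L"

definition chi_stat :: "nat \<Rightarrow> (nat \<Rightarrow> real) \<Rightarrow> (nat \<Rightarrow> real) \<Rightarrow> (nat \<Rightarrow> real)
    \<Rightarrow> (nat \<Rightarrow> real) \<Rightarrow> (nat \<Rightarrow> real) \<Rightarrow> real" where
  "chi_stat n \<sigma> \<omega> \<omega>' \<zeta> \<zeta>' = (\<Sum>i=1..n. \<sigma> i * (\<omega> i - \<zeta> i) * (\<omega>' i - \<zeta>' i))"

definition joint_pmf :: "nat \<Rightarrow> nat \<Rightarrow> nat \<Rightarrow> (nat \<Rightarrow> real) \<Rightarrow> (nat \<Rightarrow> real)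
    \<Rightarrow> (((nat \<Rightarrow> nat) \<times> (nat \<Rightarrow> nat)) \<times> ((nat \<Rightarrow> nat) \<times> (nat \<Rightarrow> nat))) pmf" where
  "joint_pmf n L R p q =
     pair_pmf (pair_pmf (sample_pmf L (cat_pmf n p)) (sample_pmf L (cat_pmf n p)))
              (pair_pmf (sample_pmf R (cat_pmf n q)) (sample_pmf R (cat_pmf n q)))"

definition claim_prob :: "nat \<Rightarrow> (nat \<Rightarrow> real) \<Rightarrow> real \<Rightarrow> nat \<Rightarrow> nat
    \<Rightarrow> (nat \<Rightarrow> real) \<Rightarrow> (nat \<Rightarrow> real) \<Rightarrow> real" where
  "claim_prob n \<sigma> l L R p q =
     measure_pmf.prob (joint_pmf n L R p q)
       {((E, E'), (F, F')). \<bar>chi_stat n \<sigma> (empirical L E) (empirical L E')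
                                     (empirical R F) (empirical R F')\<bar> > l}"

end

theory Submission
  imports Defs
begin

(* Write a = \<omega> - \<zeta> and a' = \<omega>' - \<zeta>'. The pairs (E, F) and (E', F') are independent and
   identically distributed, so \<chi> = \<Sum>\<^sub>i \<sigma>\<^sub>i a\<^sub>i a'\<^sub>i is a bilinear form in two i.i.d. copies of a:
   its mean is \<Sum>\<^sub>i \<sigma>\<^sub>i (E a\<^sub>i)\<^sup>2 = \<Sum>\<^sub>i \<sigma>\<^sub>i (p\<^sub>i - q\<^sub>i)\<^sup>2 and its second moment is
   \<Sum>\<^sub>i\<^sub>j \<sigma>\<^sub>i \<sigma>\<^sub>j (E a\<^sub>i a\<^sub>j)\<^sup>2. With d = p - q and C the covariance matrix of a (multinomial
   covariances scaled by 1/L and 1/R) this makes the variance \<Sum>\<^sub>i\<^sub>j \<sigma>\<^sub>i \<sigma>\<^sub>j (2 d\<^sub>i d\<^sub>j C\<^sub>i\<^sub>j + C\<^sub>i\<^sub>j\<^sup>2).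
   Since C is a diagonal matrix minus a positive semidefinite one, the cross term is at most
   2 \<Sum>\<^sub>i \<sigma>\<^sub>i\<^sup>2 d\<^sub>i\<^sup>2 (p\<^sub>i/L + q\<^sub>i/R); the quadratic term is bounded by Cauchy-Schwarz. The
   resulting bound Var \<chi> \<le> 4A/M + 8B/M\<^sup>2, with A and B the two radicands in claim (2), turns
   both claims into instances of Chebyshev's inequality (the second one even with 1/\<theta>\<^sup>2 in
   place of 3/\<theta>\<^sup>2). *)

section \<open>Products of distributions\<close>

lemma expectation_pair_pmf_mult:
  fixes f g :: "_ \<Rightarrow> real"
  assumes "finite (set_pmf A)" and "finite (set_pmf B)"
  shows "measure_pmf.expectation (pair_pmf A B) (\<lambda>z. f (fst z) * g (snd z))
       = measure_pmf.expectation A f * measure_pmf.expectation B g"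
proof -
  have "measure_pmf.expectation (pair_pmf A B) (\<lambda>z. f (fst z) * g (snd z))
      = (\<Sum>z\<in>set_pmf A \<times> set_pmf B. pmf (pair_pmf A B) z *\<^sub>R (f (fst z) * g (snd z)))"
    using assms by (intro integral_measure_pmf) auto
  also have "\<dots> = (\<Sum>a\<in>set_pmf A. \<Sum>b\<in>set_pmf B. (pmf A a * f a) * (pmf B b * g b))"
    by (simp add: sum.cartesian_product' pmf_pair algebra_simps)
  also have "\<dots> = (\<Sum>a\<in>set_pmf A. pmf A a *\<^sub>R f a) * (\<Sum>b\<in>set_pmf B. pmf B b *\<^sub>R g b)"
    by (simp add: sum_product)
  also have "\<dots> = measure_pmf.expectation A f * measure_pmf.expectation B g"
    using assms by (simp add: integral_measure_pmf[of "set_pmf A"] integral_measure_pmf[of "set_pmf B"])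
  finally show ?thesis .
qed

lemma pair_pmf_interchange:
  fixes A A' :: "'a pmf" and B B' :: "'b pmf"
  shows "pair_pmf (pair_pmf A A') (pair_pmf B B')
     = map_pmf (\<lambda>((a, b), (a', b')). ((a, a'), (b, b'))) (pair_pmf (pair_pmf A B) (pair_pmf A' B'))"
proof (rule pmf_eqI)
  fix x :: "('a \<times> 'a) \<times> ('b \<times> 'b)"
  let ?f = "\<lambda>((a :: 'a, b :: 'b), (a', b')). ((a, a'), (b, b'))"
  obtain a a' b b' where x: "x = ?f ((a, b), (a', b'))"
    by (metis case_prod_conv prod.collapse)
  have "inj ?f"
    by (auto simp: inj_def)
  then have "pmf (map_pmf ?f (pair_pmf (pair_pmf A B) (pair_pmf A' B'))) x
      = pmf (pair_pmf (pair_pmf A B) (pair_pmf A' B')) ((a, b), (a', b'))"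
    unfolding x by (rule pmf_map_inj')
  then show "pmf (pair_pmf (pair_pmf A A') (pair_pmf B B')) x
      = pmf (map_pmf ?f (pair_pmf (pair_pmf A B) (pair_pmf A' B'))) x"
    by (simp add: x pmf_pair)
qed

lemma map_pmf_Pi_pmf_two_components:
  assumes "finite A" "k \<in> A" "k' \<in> A" "k \<noteq> k'"
  shows "map_pmf (\<lambda>X. (X k, X k')) (Pi_pmf A dflt p) = pair_pmf (p k) (p k')"
proof -
  let ?P = "Pi_pmf (A - {k}) dflt p"
  have "Pi_pmf A dflt p = map_pmf (\<lambda>(y, X). X(k := y)) (pair_pmf (p k) ?P)"
    using Pi_pmf_insert[of "A - {k}" k dflt p] assms by (simp add: insert_absorb)
  then have "map_pmf (\<lambda>X. (X k, X k')) (Pi_pmf A dflt p)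
      = map_pmf (\<lambda>(y, X). (id y, X k')) (pair_pmf (p k) ?P)"
    using assms by (simp add: pmf.map_comp o_def case_prod_unfold)
  also have "\<dots> = pair_pmf (p k) (map_pmf (\<lambda>X. X k') ?P)"
    by (simp only: map_pair pmf.map_id)
  also have "map_pmf (\<lambda>X. X k') ?P = p k'"
    using assms by (simp add: Pi_pmf_component)
  finally show ?thesis .
qed

section \<open>Empirical frequencies\<close>

lemma finite_set_pmf_sample_pmf:
  "finite (set_pmf D) \<Longrightarrow> finite (set_pmf (sample_pmf L D))"
  unfolding sample_pmf_def by (subst set_Pi_pmf) auto

lemma empirical_eq_sum_of_bool: "empirical L X i = (\<Sum>k<L. of_bool (X k = i)) / real L"
  unfolding empirical_def by (simp add: Int_def)

lemma expectation_of_bool_eq_pmf: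
  "measure_pmf.expectation D (\<lambda>v. of_bool (v = i) :: real) = pmf D i"
proof -
  have "(\<lambda>v. of_bool (v = i) :: real) = indicator {i}"
    by (auto simp: indicator_def)
  then show ?thesis
    by (simp add: measure_pmf_single)
qed

lemma expectation_sample_pmf_component:
  fixes f :: "_ \<Rightarrow> real"
  assumes "k < L"
  shows "measure_pmf.expectation (sample_pmf L D) (\<lambda>X. f (X k)) = measure_pmf.expectation D f"
proof -
  have "measure_pmf.expectation (sample_pmf L D) (\<lambda>X. f (X k))
      = measure_pmf.expectation (map_pmf (\<lambda>X. X k) (sample_pmf L D)) f"
    by simp
  also have "map_pmf (\<lambda>X. X k) (sample_pmf L D) = D"
    unfolding sample_pmf_def using assms by (simp add: Pi_pmf_component)
  finally show ?thesis .
qed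

lemma expectation_sample_pmf_two_components:
  fixes f g :: "_ \<Rightarrow> real"
  assumes "k < L" "k' < L" "k \<noteq> k'" and "finite (set_pmf D)"
  shows "measure_pmf.expectation (sample_pmf L D) (\<lambda>X. f (X k) * g (X k'))
       = measure_pmf.expectation D f * measure_pmf.expectation D g"
proof -
  have "measure_pmf.expectation (sample_pmf L D) (\<lambda>X. f (X k) * g (X k'))
      = measure_pmf.expectation (map_pmf (\<lambda>X. (X k, X k')) (sample_pmf L D)) (\<lambda>z. f (fst z) * g (snd z))"
    by simp
  also have "map_pmf (\<lambda>X. (X k, X k')) (sample_pmf L D) = pair_pmf D D"
    unfolding sample_pmf_def using assms by (simp add: map_pmf_Pi_pmf_two_components)
  also have "measure_pmf.expectation (pair_pmf D D) (\<lambda>z. f (fst z) * g (snd z))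
      = measure_pmf.expectation D f * measure_pmf.expectation D g"
    using assms(4) by (intro expectation_pair_pmf_mult)
  finally show ?thesis .
qed

lemma sum_sum_if_diagonal:
  "(\<Sum>k<L. \<Sum>k'<L. if k = k' then a else b) = real L * a + (real L * real L - real L) * (b::real)"
proof -
  have "(\<Sum>k'<L. if k = k' then a else b) = (a - b) + real L * b" if "k < L" for k
  proof -
    have "(\<Sum>k'<L. if k = k' then a else b) = (\<Sum>k'<L. (if k = k' then a - b else 0) + b)"
      by (intro sum.cong) auto
    also have "\<dots> = (a - b) + real L * b"
      using that by (simp add: sum.distrib)
    finally show ?thesis .
  qed
  then have "(\<Sum>k<L. \<Sum>k'<L. if k = k' then a else b) = (\<Sum>k<L. (a - b) + real L * b)"
    by simp
  then show ?thesis
    by (simp add: algebra_simps)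
qed

lemma expectation_empirical:
  assumes "L > 0" and "finite (set_pmf D)"
  shows "measure_pmf.expectation (sample_pmf L D) (\<lambda>X. empirical L X i) = pmf D i"
proof -
  have "measure_pmf.expectation (sample_pmf L D) (\<lambda>X. empirical L X i)
      = (\<Sum>k<L. measure_pmf.expectation (sample_pmf L D) (\<lambda>X. of_bool (X k = i))) / real L"
    unfolding empirical_eq_sum_of_bool using assms
    \<comment> \<open>the default simp rules would fold the sums of indicators back into cardinalities\<close>
    by (simp add: Bochner_Integration.integral_sum integrable_measure_pmf_finite finite_set_pmf_sample_pmf
        del: sum_of_bool_eq sum_mult_of_bool_eq sum_of_bool_mult_eq)
  also have "\<dots> = pmf D i"
    using assms by (simp add: expectation_sample_pmf_component[where f = "\<lambda>v. of_bool (v = i)"]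
        expectation_of_bool_eq_pmf)
  finally show ?thesis .
qed

lemma expectation_empirical_mult:
  assumes "L > 0" and fin: "finite (set_pmf D)"
  shows "measure_pmf.expectation (sample_pmf L D) (\<lambda>X. empirical L X i * empirical L X j)
     = pmf D i * pmf D j + ((if i = j then pmf D i else 0) - pmf D i * pmf D j) / real L"
proof -
  have indicator_products:
    "measure_pmf.expectation (sample_pmf L D) (\<lambda>X. of_bool (X k = i) * of_bool (X k' = j))
      = (if k = k' then (if i = j then pmf D i else 0) else pmf D i * pmf D j)"
    if "k < L" "k' < L" for k k'
  proof (cases "k = k'")
    case True
    have "(\<lambda>X. of_bool (X k = i) * of_bool (X k' = j) :: real) = (\<lambda>X. of_bool (i = j) * of_bool (X k = i))"
      using True by (auto simp: fun_eq_iff)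
    then show ?thesis
      using True that by (simp add: expectation_sample_pmf_component[where f = "\<lambda>v. of_bool (v = i)"]
          expectation_of_bool_eq_pmf)
  next
    case False
    then show ?thesis
      using that fin by (simp add: expectation_sample_pmf_two_components[where f = "\<lambda>v. of_bool (v = i)"
          and g = "\<lambda>v. of_bool (v = j)"] expectation_of_bool_eq_pmf)
  qed
  have empirical_product: "empirical L X i * empirical L X j
      = (\<Sum>k<L. \<Sum>k'<L. of_bool (X k = i) * of_bool (X k' = j)) / (real L * real L)" for X
    unfolding empirical_eq_sum_of_bool by (simp add: sum_product del: sum_of_bool_eq)
  have "measure_pmf.expectation (sample_pmf L D) (\<lambda>X. empirical L X i * empirical L X j)
      = (\<Sum>k<L. \<Sum>k'<L. measure_pmf.expectation (sample_pmf L D)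
            (\<lambda>X. of_bool (X k = i) * of_bool (X k' = j))) / (real L * real L)"
    unfolding empirical_product using fin
    by (simp add: Bochner_Integration.integral_sum integrable_measure_pmf_finite finite_set_pmf_sample_pmf
        del: sum_of_bool_eq sum_mult_of_bool_eq sum_of_bool_mult_eq)
  also have "\<dots> = (\<Sum>k<L. \<Sum>k'<L. if k = k' then (if i = j then pmf D i else 0) else pmf D i * pmf D j)
      / (real L * real L)"
    by (simp add: indicator_products)
  also have "\<dots> = pmf D i * pmf D j + ((if i = j then pmf D i else 0) - pmf D i * pmf D j) / real L"
    unfolding sum_sum_if_diagonal using assms by (simp add: field_simps)
  finally show ?thesis .
qed

definition empirical_diff :: "nat \<Rightarrow> nat \<Rightarrow> (nat \<Rightarrow> nat) \<times> (nat \<Rightarrow> nat) \<Rightarrow> nat \<Rightarrow> real" where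
  "empirical_diff L R EF i = empirical L (fst EF) i - empirical R (snd EF) i"

(* The covariance matrix of \<omega> - \<zeta> when \<alpha> = 1/L and \<beta> = 1/R. *)
definition two_sample_cov :: "real \<Rightarrow> real \<Rightarrow> ('i \<Rightarrow> real) \<Rightarrow> ('i \<Rightarrow> real) \<Rightarrow> 'i \<Rightarrow> 'i \<Rightarrow> real" where
  "two_sample_cov \<alpha> \<beta> p q i j =
     (if i = j then \<alpha> * p i + \<beta> * q i else 0) - (\<alpha> * p i * p j + \<beta> * q i * q j)"

lemma expectation_empirical_diff:
  assumes "L > 0" "R > 0" "finite (set_pmf DE)" "finite (set_pmf DF)"
  shows "measure_pmf.expectation (pair_pmf (sample_pmf L DE) (sample_pmf R DF))
           (\<lambda>EF. empirical_diff L R EF i) = pmf DE i - pmf DF i"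
  using assms unfolding empirical_diff_def
  by (simp add: integrable_measure_pmf_finite finite_set_pmf_sample_pmf expectation_empirical
      expectation_pair_pmf_fst[where f = "\<lambda>X. empirical L X i"]
      expectation_pair_pmf_snd[where f = "\<lambda>X. empirical R X i"])

lemma expectation_empirical_diff_mult:
  assumes "L > 0" "R > 0" and fin: "finite (set_pmf DE)" "finite (set_pmf DF)"
  shows "measure_pmf.expectation (pair_pmf (sample_pmf L DE) (sample_pmf R DF))
           (\<lambda>EF. empirical_diff L R EF i * empirical_diff L R EF j)
       = (pmf DE i - pmf DF i) * (pmf DE j - pmf DF j)
         + two_sample_cov (1 / real L) (1 / real R) (pmf DE) (pmf DF) i j"
proof -
  let ?E = "sample_pmf L DE" and ?F = "sample_pmf R DF"
  have fin_samples: "finite (set_pmf ?E)" "finite (set_pmf ?F)"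
    using fin by (auto intro: finite_set_pmf_sample_pmf)
  have expand: "empirical_diff L R EF i * empirical_diff L R EF j
      = (empirical L (fst EF) i * empirical L (fst EF) j + empirical R (snd EF) i * empirical R (snd EF) j)
        - (empirical L (fst EF) i * empirical R (snd EF) j + empirical L (fst EF) j * empirical R (snd EF) i)"
    for EF
    by (simp add: empirical_diff_def algebra_simps)
  have "measure_pmf.expectation (pair_pmf ?E ?F) (\<lambda>EF. empirical_diff L R EF i * empirical_diff L R EF j)
      = (measure_pmf.expectation ?E (\<lambda>X. empirical L X i * empirical L X j)
         + measure_pmf.expectation ?F (\<lambda>X. empirical R X i * empirical R X j))
        - (measure_pmf.expectation ?E (\<lambda>X. empirical L X i) * measure_pmf.expectation ?F (\<lambda>X. empirical R X j)
         + measure_pmf.expectation ?E (\<lambda>X. empirical L X j) * measure_pmf.expectation ?F (\<lambda>X. empirical R X i))"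
    unfolding expand using fin_samples
      expectation_pair_pmf_fst[where f = "\<lambda>X. empirical L X i * empirical L X j" and q = ?F]
      expectation_pair_pmf_snd[where f = "\<lambda>X. empirical R X i * empirical R X j" and p = ?E]
      expectation_pair_pmf_mult[OF fin_samples, of "\<lambda>X. empirical L X i" "\<lambda>X. empirical R X j"]
      expectation_pair_pmf_mult[OF fin_samples, of "\<lambda>X. empirical L X j" "\<lambda>X. empirical R X i"]
    by (simp add: integrable_measure_pmf_finite)
  also have "\<dots> = (pmf DE i - pmf DF i) * (pmf DE j - pmf DF j)
         + two_sample_cov (1 / real L) (1 / real R) (pmf DE) (pmf DF) i j"
    using assms by (simp add: expectation_empirical expectation_empirical_mult two_sample_cov_def
        diff_divide_distrib algebra_simps)
  finally show ?thesis .
qed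

section \<open>Bilinear forms in two i.i.d. copies\<close>

lemma expectation_bilinear_iid:
  fixes a :: "'x \<Rightarrow> 'i \<Rightarrow> real"
  assumes fin: "finite (set_pmf D)" and "finite I"
  shows "measure_pmf.expectation (pair_pmf D D) (\<lambda>z. \<Sum>i\<in>I. s i * a (fst z) i * a (snd z) i)
       = (\<Sum>i\<in>I. s i * (measure_pmf.expectation D (\<lambda>x. a x i))\<^sup>2)"
proof -
  have "measure_pmf.expectation (pair_pmf D D) (\<lambda>z. \<Sum>i\<in>I. s i * a (fst z) i * a (snd z) i)
      = (\<Sum>i\<in>I. s i * measure_pmf.expectation (pair_pmf D D) (\<lambda>z. a (fst z) i * a (snd z) i))"
    using fin by (simp add: Bochner_Integration.integral_sum integrable_measure_pmf_finite mult.assoc)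
  also have "\<dots> = (\<Sum>i\<in>I. s i * (measure_pmf.expectation D (\<lambda>x. a x i))\<^sup>2)"
    by (simp add: expectation_pair_pmf_mult[OF fin fin, where f = "\<lambda>x. a x i" and g = "\<lambda>x. a x i" for i]
        power2_eq_square)
  finally show ?thesis .
qed

lemma expectation_bilinear_iid_square:
  fixes a :: "'x \<Rightarrow> 'i \<Rightarrow> real"
  assumes fin: "finite (set_pmf D)" and "finite I"
  shows "measure_pmf.expectation (pair_pmf D D) (\<lambda>z. (\<Sum>i\<in>I. s i * a (fst z) i * a (snd z) i)\<^sup>2)
       = (\<Sum>i\<in>I. \<Sum>j\<in>I. s i * s j * (measure_pmf.expectation D (\<lambda>x. a x i * a x j))\<^sup>2)"
proof -
  have expand: "(\<Sum>i\<in>I. s i * a (fst z) i * a (snd z) i)\<^sup>2 =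
      (\<Sum>i\<in>I. \<Sum>j\<in>I. s i * s j * ((a (fst z) i * a (fst z) j) * (a (snd z) i * a (snd z) j)))" for z
    by (simp add: power2_eq_square sum_product algebra_simps)
  have "measure_pmf.expectation (pair_pmf D D) (\<lambda>z. (\<Sum>i\<in>I. s i * a (fst z) i * a (snd z) i)\<^sup>2)
      = (\<Sum>i\<in>I. \<Sum>j\<in>I. s i * s j * measure_pmf.expectation (pair_pmf D D)
           (\<lambda>z. (a (fst z) i * a (fst z) j) * (a (snd z) i * a (snd z) j)))"
    unfolding expand using fin
    by (simp add: Bochner_Integration.integral_sum integrable_measure_pmf_finite)
  also have "\<dots> = (\<Sum>i\<in>I. \<Sum>j\<in>I. s i * s j * (measure_pmf.expectation D (\<lambda>x. a x i * a x j))\<^sup>2)"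
    by (simp add: expectation_pair_pmf_mult[OF fin fin, where f = "\<lambda>x. a x i * a x j"
          and g = "\<lambda>x. a x i * a x j" for i j] power2_eq_square)
  finally show ?thesis .
qed

lemma variance_bilinear_iid:
  fixes a :: "'x \<Rightarrow> 'i \<Rightarrow> real"
  assumes fin: "finite (set_pmf D)" and I: "finite I"
    and mean: "\<And>i. i \<in> I \<Longrightarrow> measure_pmf.expectation D (\<lambda>x. a x i) = d i"
    and second: "\<And>i j. i \<in> I \<Longrightarrow> j \<in> I \<Longrightarrow>
                   measure_pmf.expectation D (\<lambda>x. a x i * a x j) = d i * d j + C i j"
  shows "measure_pmf.variance (pair_pmf D D) (\<lambda>z. \<Sum>i\<in>I. s i * a (fst z) i * a (snd z) i)
       = (\<Sum>i\<in>I. \<Sum>j\<in>I. s i * s j * (2 * d i * d j * C i j + (C i j)\<^sup>2))"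
proof -
  let ?chi = "\<lambda>z. \<Sum>i\<in>I. s i * a (fst z) i * a (snd z) i"
  have "measure_pmf.variance (pair_pmf D D) ?chi
      = measure_pmf.expectation (pair_pmf D D) (\<lambda>z. (?chi z)\<^sup>2)
        - (measure_pmf.expectation (pair_pmf D D) ?chi)\<^sup>2"
    using fin by (intro measure_pmf.variance_eq) (auto intro: integrable_measure_pmf_finite)
  also have "\<dots> = (\<Sum>i\<in>I. \<Sum>j\<in>I. s i * s j * (d i * d j + C i j)\<^sup>2) - (\<Sum>i\<in>I. s i * (d i)\<^sup>2)\<^sup>2"
    using fin I mean second by (simp add: expectation_bilinear_iid expectation_bilinear_iid_square)
  also have "(\<Sum>i\<in>I. s i * (d i)\<^sup>2)\<^sup>2 = (\<Sum>i\<in>I. \<Sum>j\<in>I. s i * s j * ((d i)\<^sup>2 * (d j)\<^sup>2))"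
    by (simp add: power2_eq_square sum_product algebra_simps)
  also have "(\<Sum>i\<in>I. \<Sum>j\<in>I. s i * s j * (d i * d j + C i j)\<^sup>2) - \<dots>
      = (\<Sum>i\<in>I. \<Sum>j\<in>I. s i * s j * (2 * d i * d j * C i j + (C i j)\<^sup>2))"
    by (simp add: sum_subtractf[symmetric] power2_eq_square algebra_simps)
  finally show ?thesis .
qed

section \<open>Covariance bounds\<close>

lemma weighted_square_le:
  fixes a b x y :: real
  assumes "0 \<le> a" "0 \<le> b"
  shows "(a * x + b * y)\<^sup>2 \<le> (a + b) * (a * x\<^sup>2 + b * y\<^sup>2)"
proof -
  have "0 \<le> a * b * (x - y)\<^sup>2"
    using assms by simp
  then show ?thesis
    by (simp add: power2_eq_square algebra_simps)
qed

lemma square_sum_le_sum_squares: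
  fixes p s :: "'i \<Rightarrow> real"
  assumes "finite I" and p: "\<And>i. i \<in> I \<Longrightarrow> 0 \<le> p i" and sum_p: "sum p I \<le> 1"
  shows "(\<Sum>i\<in>I. s i * (p i)\<^sup>2)\<^sup>2 \<le> (\<Sum>i\<in>I. (s i)\<^sup>2 * (p i)\<^sup>2)"
proof -
  have "(\<Sum>i\<in>I. (p i)\<^sup>2) \<le> sum p I"
  proof (intro sum_mono)
    fix i assume "i \<in> I"
    moreover have "p i \<le> sum p I"
      using \<open>i \<in> I\<close> assms by (intro member_le_sum) auto
    ultimately show "(p i)\<^sup>2 \<le> p i"
      using p sum_p by (simp add: power2_eq_square mult_left_le)
  qed
  then have sum_squares: "(\<Sum>i\<in>I. (p i)\<^sup>2) \<le> 1"
    using sum_p by linarith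
  have "(\<Sum>i\<in>I. s i * (p i)\<^sup>2)\<^sup>2 = (\<Sum>i\<in>I. (s i * p i) * p i)\<^sup>2"
    by (simp add: power2_eq_square mult.assoc)
  also have "\<dots> \<le> (\<Sum>i\<in>I. (s i * p i)\<^sup>2) * (\<Sum>i\<in>I. (p i)\<^sup>2)"
    by (rule Cauchy_Schwarz_ineq_sum)
  also have "\<dots> \<le> (\<Sum>i\<in>I. (s i * p i)\<^sup>2)"
    using sum_squares by (intro mult_left_le) (auto intro: sum_nonneg)
  finally show ?thesis
    by (simp add: power_mult_distrib)
qed

lemma two_sample_cov_quadratic_form_le:
  fixes \<sigma> d p q :: "'i \<Rightarrow> real"
  assumes "finite I" "0 \<le> \<alpha>" "0 \<le> \<beta>"
  shows "(\<Sum>i\<in>I. \<Sum>j\<in>I. \<sigma> i * \<sigma> j * d i * d j * two_sample_cov \<alpha> \<beta> p q i j)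
       \<le> (\<Sum>i\<in>I. (\<sigma> i)\<^sup>2 * (d i)\<^sup>2 * (\<alpha> * p i + \<beta> * q i))"
proof -
  let ?w = "\<lambda>i j. \<sigma> i * \<sigma> j * d i * d j"
  have diagonal: "(\<Sum>i\<in>I. \<Sum>j\<in>I. ?w i j * (if i = j then \<alpha> * p i + \<beta> * q i else 0))
      = (\<Sum>i\<in>I. (\<sigma> i)\<^sup>2 * (d i)\<^sup>2 * (\<alpha> * p i + \<beta> * q i))"
    using assms by (simp add: if_distrib power2_eq_square mult.assoc cong: if_cong)
  have rank_two: "(\<Sum>i\<in>I. \<Sum>j\<in>I. ?w i j * (\<alpha> * p i * p j + \<beta> * q i * q j))
      = \<alpha> * (\<Sum>i\<in>I. \<sigma> i * d i * p i)\<^sup>2 + \<beta> * (\<Sum>i\<in>I. \<sigma> i * d i * q i)\<^sup>2"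
    by (simp add: power2_eq_square sum_product sum_distrib_left sum.distrib algebra_simps)
  have "(\<Sum>i\<in>I. \<Sum>j\<in>I. ?w i j * two_sample_cov \<alpha> \<beta> p q i j)
      = (\<Sum>i\<in>I. \<Sum>j\<in>I. ?w i j * (if i = j then \<alpha> * p i + \<beta> * q i else 0))
        - (\<Sum>i\<in>I. \<Sum>j\<in>I. ?w i j * (\<alpha> * p i * p j + \<beta> * q i * q j))"
    by (simp add: two_sample_cov_def right_diff_distrib sum_subtractf)
  moreover have "0 \<le> \<alpha> * (\<Sum>i\<in>I. \<sigma> i * d i * p i)\<^sup>2 + \<beta> * (\<Sum>i\<in>I. \<sigma> i * d i * q i)\<^sup>2"
    using assms by simp
  ultimately show ?thesis
    unfolding diagonal rank_two by linarith
qed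

lemma two_sample_cov_square_sum_le:
  fixes \<sigma> p q :: "'i \<Rightarrow> real"
  assumes I: "finite I" and \<sigma>: "\<And>i. i \<in> I \<Longrightarrow> 0 \<le> \<sigma> i"
    and p: "\<And>i. i \<in> I \<Longrightarrow> 0 \<le> p i" "sum p I \<le> 1"
    and q: "\<And>i. i \<in> I \<Longrightarrow> 0 \<le> q i" "sum q I \<le> 1"
    and \<alpha>: "0 \<le> \<alpha>" and \<beta>: "0 \<le> \<beta>"
  shows "(\<Sum>i\<in>I. \<Sum>j\<in>I. \<sigma> i * \<sigma> j * (two_sample_cov \<alpha> \<beta> p q i j)\<^sup>2)
       \<le> 2 * (\<alpha> + \<beta>) * (\<alpha> * (\<Sum>i\<in>I. (\<sigma> i)\<^sup>2 * (p i)\<^sup>2) + \<beta> * (\<Sum>i\<in>I. (\<sigma> i)\<^sup>2 * (q i)\<^sup>2))"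
proof -
  define S where "S = (\<alpha> + \<beta>) * (\<alpha> * (\<Sum>i\<in>I. (\<sigma> i)\<^sup>2 * (p i)\<^sup>2) + \<beta> * (\<Sum>i\<in>I. (\<sigma> i)\<^sup>2 * (q i)\<^sup>2))"
  let ?D = "\<lambda>i. \<alpha> * p i + \<beta> * q i" and ?K = "\<lambda>i j. \<alpha> * p i * p j + \<beta> * q i * q j"
  have pointwise: "\<sigma> i * \<sigma> j * (two_sample_cov \<alpha> \<beta> p q i j)\<^sup>2
      \<le> \<sigma> i * \<sigma> j * (if i = j then ?D i else 0)\<^sup>2 + \<sigma> i * \<sigma> j * (?K i j)\<^sup>2"
    if "i \<in> I" "j \<in> I" for i j
  proof -
    let ?d = "if i = j then ?D i else 0"
    have "0 \<le> ?d * ?K i j"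
      using that p q \<alpha> \<beta> by simp
    moreover have "(two_sample_cov \<alpha> \<beta> p q i j)\<^sup>2 = ?d\<^sup>2 + (?K i j)\<^sup>2 - 2 * ?d * ?K i j"
      unfolding two_sample_cov_def by (rule power2_diff)
    ultimately have "(two_sample_cov \<alpha> \<beta> p q i j)\<^sup>2 \<le> ?d\<^sup>2 + (?K i j)\<^sup>2"
      by linarith
    then show ?thesis
      using that \<sigma> by (simp add: distrib_left[symmetric] mult_left_mono)
  qed
  have diagonal: "(\<Sum>i\<in>I. \<Sum>j\<in>I. \<sigma> i * \<sigma> j * (if i = j then ?D i else 0)\<^sup>2) \<le> S"
  proof -
    have "(\<Sum>i\<in>I. \<Sum>j\<in>I. \<sigma> i * \<sigma> j * (if i = j then ?D i else 0)\<^sup>2)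
        = (\<Sum>i\<in>I. \<Sum>j\<in>I. if i = j then (\<sigma> i)\<^sup>2 * (?D i)\<^sup>2 else 0)"
      by (intro sum.cong refl) (simp add: power2_eq_square)
    also have "\<dots> = (\<Sum>i\<in>I. (\<sigma> i)\<^sup>2 * (?D i)\<^sup>2)"
      using I by simp
    also have "\<dots> \<le> (\<Sum>i\<in>I. (\<sigma> i)\<^sup>2 * ((\<alpha> + \<beta>) * (\<alpha> * (p i)\<^sup>2 + \<beta> * (q i)\<^sup>2)))"
      using \<alpha> \<beta> by (intro sum_mono mult_left_mono weighted_square_le) auto
    also have "\<dots> = S"
      by (simp add: S_def sum_distrib_left sum.distrib algebra_simps)
    finally show ?thesis .
  qed
  have rank_two: "(\<Sum>i\<in>I. \<Sum>j\<in>I. \<sigma> i * \<sigma> j * (?K i j)\<^sup>2) \<le> S"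
  proof -
    have "(\<Sum>i\<in>I. \<Sum>j\<in>I. \<sigma> i * \<sigma> j * (?K i j)\<^sup>2)
        \<le> (\<Sum>i\<in>I. \<Sum>j\<in>I. \<sigma> i * \<sigma> j * ((\<alpha> + \<beta>) * (\<alpha> * (p i * p j)\<^sup>2 + \<beta> * (q i * q j)\<^sup>2)))"
      using \<alpha> \<beta> \<sigma> by (intro sum_mono mult_left_mono)
        (auto simp: mult.assoc intro!: weighted_square_le[of \<alpha> \<beta> "p _ * p _" "q _ * q _", simplified mult.assoc])
    also have "\<dots> = (\<alpha> + \<beta>) * (\<alpha> * (\<Sum>i\<in>I. \<sigma> i * (p i)\<^sup>2)\<^sup>2 + \<beta> * (\<Sum>i\<in>I. \<sigma> i * (q i)\<^sup>2)\<^sup>2)"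
      by (simp add: power2_eq_square sum_product sum_distrib_left sum.distrib algebra_simps)
    also have "\<dots> \<le> S"
      unfolding S_def using \<alpha> \<beta> square_sum_le_sum_squares[OF I p] square_sum_le_sum_squares[OF I q]
      by (intro mult_left_mono add_mono) auto
    finally show ?thesis .
  qed
  have "(\<Sum>i\<in>I. \<Sum>j\<in>I. \<sigma> i * \<sigma> j * (two_sample_cov \<alpha> \<beta> p q i j)\<^sup>2)
      \<le> (\<Sum>i\<in>I. \<Sum>j\<in>I. \<sigma> i * \<sigma> j * (if i = j then ?D i else 0)\<^sup>2 + \<sigma> i * \<sigma> j * (?K i j)\<^sup>2)"
    using pointwise by (intro sum_mono) auto
  also have "\<dots> = (\<Sum>i\<in>I. \<Sum>j\<in>I. \<sigma> i * \<sigma> j * (if i = j then ?D i else 0)\<^sup>2)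
      + (\<Sum>i\<in>I. \<Sum>j\<in>I. \<sigma> i * \<sigma> j * (?K i j)\<^sup>2)"
    by (simp add: sum.distrib)
  finally show ?thesis
    using diagonal rank_two unfolding S_def by linarith
qed

section \<open>Chebyshev bounds\<close>

lemma Chebyshev_prob_abs_deviation_gt:
  fixes X :: "'a \<Rightarrow> real"
  assumes fin: "finite (set_pmf D)" and \<theta>: "0 < \<theta>" and c: "0 \<le> c"
    and var: "measure_pmf.variance D X \<le> c\<^sup>2"
  shows "measure_pmf.prob D {x. \<theta> * c < \<bar>X x - measure_pmf.expectation D X\<bar>} \<le> 1 / \<theta>\<^sup>2"
proof (cases "c = 0")
  case True
  let ?\<mu> = "measure_pmf.expectation D X"
  have "measure_pmf.variance D X = 0"
    using var True measure_pmf.variance_positive[of D X] by simp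
  then have "AE x in D. (X x - ?\<mu>)\<^sup>2 = 0"
    by (subst (asm) integral_nonneg_eq_0_iff_AE) (auto simp: integrable_measure_pmf_finite fin)
  then have "AE x in D. \<not> \<theta> * c < \<bar>X x - ?\<mu>\<bar>"
    using True by (auto elim!: eventually_mono)
  then have "measure_pmf.prob D {x. \<theta> * c < \<bar>X x - ?\<mu>\<bar>} = 0"
    using measure_pmf.prob_eq_0_AE by simp
  then show ?thesis
    by simp
next
  case False
  then have pos: "0 < \<theta> * c"
    using \<theta> c by simp
  have "measure_pmf.prob D {x. \<theta> * c < \<bar>X x - measure_pmf.expectation D X\<bar>}
      \<le> measure_pmf.prob D {x \<in> space D. \<theta> * c \<le> \<bar>X x - measure_pmf.expectation D X\<bar>}"
    by (intro measure_pmf.finite_measure_mono) auto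
  also have "\<dots> \<le> measure_pmf.variance D X / (\<theta> * c)\<^sup>2"
    using pos fin by (intro measure_pmf.Chebyshev_inequality) (auto simp: integrable_measure_pmf_finite)
  also have "\<dots> \<le> c\<^sup>2 / (\<theta> * c)\<^sup>2"
    using var by (simp add: divide_right_mono)
  also have "\<dots> = 1 / \<theta>\<^sup>2"
    using False by (simp add: power_mult_distrib)
  finally show ?thesis .
qed

lemma prob_abs_gt_le_of_expectation_zero:
  fixes X :: "'a \<Rightarrow> real"
  assumes "finite (set_pmf D)" "0 < \<theta>" "0 \<le> c"
    and "measure_pmf.expectation D X = 0" and "measure_pmf.variance D X \<le> c\<^sup>2" and "\<theta> * c \<le> l"
  shows "measure_pmf.prob D {x. l < \<bar>X x\<bar>} \<le> 1 / \<theta>\<^sup>2"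
proof -
  have "measure_pmf.prob D {x. l < \<bar>X x\<bar>}
      \<le> measure_pmf.prob D {x. \<theta> * c < \<bar>X x - measure_pmf.expectation D X\<bar>}"
    using assms by (intro measure_pmf.finite_measure_mono) auto
  also have "\<dots> \<le> 1 / \<theta>\<^sup>2"
    using assms by (intro Chebyshev_prob_abs_deviation_gt)
  finally show ?thesis .
qed

lemma prob_abs_gt_ge_of_expectation_gt:
  fixes X :: "'a \<Rightarrow> real"
  assumes "finite (set_pmf D)" "0 < \<theta>" "0 \<le> c"
    and "measure_pmf.variance D X \<le> c\<^sup>2" and "l + \<theta> * c < measure_pmf.expectation D X"
  shows "1 - 1 / \<theta>\<^sup>2 \<le> measure_pmf.prob D {x. l < \<bar>X x\<bar>}"
proof -
  let ?far = "{x. \<theta> * c < \<bar>X x - measure_pmf.expectation D X\<bar>}"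
  have "1 - 1 / \<theta>\<^sup>2 \<le> 1 - measure_pmf.prob D ?far"
    using assms Chebyshev_prob_abs_deviation_gt by simp
  also have "\<dots> = measure_pmf.prob D (UNIV - ?far)"
    using measure_pmf.prob_compl[of ?far D] by simp
  also have "\<dots> \<le> measure_pmf.prob D {x. l < \<bar>X x\<bar>}"
    using assms by (intro measure_pmf.finite_measure_mono) auto
  finally show ?thesis .
qed

section \<open>The test statistic\<close>

lemma pmf_cat_pmf:
  assumes "p \<in> prob_simplex n"
  shows "pmf (cat_pmf n p) i = (if i \<in> {1..n} then p i else 0)"
proof -
  have "(\<integral>\<^sup>+ x. ennreal (if x \<in> {1..n} then p x else 0) \<partial>count_space UNIV)
      = (\<integral>\<^sup>+ x. ennreal (p x) * indicator {1..n} x \<partial>count_space UNIV)"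
    by (intro nn_integral_cong) (auto simp: indicator_def)
  also have "\<dots> = (\<Sum>x\<in>{1..n}. ennreal (p x))"
    by (subst nn_integral_indicator_finite) auto
  also have "\<dots> = ennreal (\<Sum>x\<in>{1..n}. p x)"
    using assms by (subst sum_ennreal) (auto simp: prob_simplex_def)
  finally have "(\<integral>\<^sup>+ x. ennreal (if x \<in> {1..n} then p x else 0) \<partial>count_space UNIV) = 1"
    using assms by (simp add: prob_simplex_def)
  then show ?thesis
    unfolding cat_pmf_def using assms by (subst pmf_embed_pmf) (auto simp: prob_simplex_def)
qed

lemma finite_set_pmf_cat_pmf:
  assumes "p \<in> prob_simplex n"
  shows "finite (set_pmf (cat_pmf n p))"
proof (rule finite_subset)
  show "set_pmf (cat_pmf n p) \<subseteq> {1..n}"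
    using pmf_cat_pmf[OF assms] by (auto simp: set_pmf_eq)
qed simp

definition two_sample_pmf :: "nat \<Rightarrow> nat \<Rightarrow> nat \<Rightarrow> (nat \<Rightarrow> real) \<Rightarrow> (nat \<Rightarrow> real)
    \<Rightarrow> ((nat \<Rightarrow> nat) \<times> (nat \<Rightarrow> nat)) pmf" where
  "two_sample_pmf n L R p q = pair_pmf (sample_pmf L (cat_pmf n p)) (sample_pmf R (cat_pmf n q))"

definition chi_paired :: "nat \<Rightarrow> (nat \<Rightarrow> real) \<Rightarrow> nat \<Rightarrow> nat
    \<Rightarrow> ((nat \<Rightarrow> nat) \<times> (nat \<Rightarrow> nat)) \<times> ((nat \<Rightarrow> nat) \<times> (nat \<Rightarrow> nat)) \<Rightarrow> real" where
  "chi_paired n \<sigma> L R z = (\<Sum>i=1..n. \<sigma> i * empirical_diff L R (fst z) i * empirical_diff L R (snd z) i)"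

lemma finite_set_pmf_two_sample_pmf:
  "p \<in> prob_simplex n \<Longrightarrow> q \<in> prob_simplex n \<Longrightarrow> finite (set_pmf (two_sample_pmf n L R p q))"
  by (simp add: two_sample_pmf_def finite_set_pmf_sample_pmf finite_set_pmf_cat_pmf)

lemma claim_prob_eq_prob_chi_paired:
  "claim_prob n \<sigma> l L R p q
     = measure_pmf.prob (pair_pmf (two_sample_pmf n L R p q) (two_sample_pmf n L R p q))
         {z. l < \<bar>chi_paired n \<sigma> L R z\<bar>}"
proof -
  have "joint_pmf n L R p q = map_pmf (\<lambda>((a, b), (a', b')). ((a, a'), (b, b')))
      (pair_pmf (two_sample_pmf n L R p q) (two_sample_pmf n L R p q))"
    unfolding joint_pmf_def two_sample_pmf_def by (rule pair_pmf_interchange)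
  then show ?thesis
    unfolding claim_prob_def
    by (simp add: chi_paired_def empirical_diff_def chi_stat_def vimage_def case_prod_beta mult.assoc)
qed

lemma expectation_chi_paired:
  assumes p: "p \<in> prob_simplex n" and q: "q \<in> prob_simplex n" and "L > 0" "R > 0"
  shows "measure_pmf.expectation (pair_pmf (two_sample_pmf n L R p q) (two_sample_pmf n L R p q))
           (chi_paired n \<sigma> L R) = (\<Sum>i=1..n. \<sigma> i * (p i - q i)\<^sup>2)"
proof -
  have "measure_pmf.expectation (pair_pmf (two_sample_pmf n L R p q) (two_sample_pmf n L R p q))
           (chi_paired n \<sigma> L R)
      = (\<Sum>i=1..n. \<sigma> i * (measure_pmf.expectation (two_sample_pmf n L R p q)
           (\<lambda>EF. empirical_diff L R EF i))\<^sup>2)"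
    unfolding chi_paired_def using p q
    by (intro expectation_bilinear_iid) (simp_all add: finite_set_pmf_two_sample_pmf)
  also have "\<dots> = (\<Sum>i=1..n. \<sigma> i * (p i - q i)\<^sup>2)"
    using assms by (intro sum.cong refl) (simp add: two_sample_pmf_def expectation_empirical_diff
        finite_set_pmf_cat_pmf pmf_cat_pmf)
  finally show ?thesis .
qed

lemma inverse_sample_sizes:
  assumes "L > 0" "R > 0"
  defines "\<gamma> \<equiv> real R / (real L + real R)" and "M \<equiv> 2 * real L * real R / (real L + real R)"
  shows "1 / real L = 2 * \<gamma> / M" and "1 / real R = 2 * (1 - \<gamma>) / M"
  using assms by (auto simp: field_simps add_nonneg_eq_0_iff)

lemma variance_chi_paired_le:
  assumes p: "p \<in> prob_simplex n" and q: "q \<in> prob_simplex n"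
    and \<sigma>: "\<forall>i\<in>{1..n}. \<sigma> i \<ge> 0" and L: "L > 0" and R: "R > 0"
  defines "\<gamma> \<equiv> real R / (real L + real R)" and "M \<equiv> 2 * real L * real R / (real L + real R)"
  shows "measure_pmf.variance (pair_pmf (two_sample_pmf n L R p q) (two_sample_pmf n L R p q))
           (chi_paired n \<sigma> L R)
       \<le> 4 / M * (\<Sum>i=1..n. (\<sigma> i)\<^sup>2 * (p i - q i)\<^sup>2 * (\<gamma> * p i + (1 - \<gamma>) * q i))
         + 8 / M\<^sup>2 * (\<gamma> * (\<Sum>i=1..n. (\<sigma> i)\<^sup>2 * (p i)\<^sup>2) + (1 - \<gamma>) * (\<Sum>i=1..n. (\<sigma> i)\<^sup>2 * (q i)\<^sup>2))"
proof -
  let ?T = "two_sample_pmf n L R p q"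
  define \<alpha> where "\<alpha> = 1 / real L"
  define \<beta> where "\<beta> = 1 / real R"
  define d where "d i = p i - q i" for i
  define Sp where "Sp = (\<Sum>i=1..n. (\<sigma> i)\<^sup>2 * (p i)\<^sup>2)"
  define Sq where "Sq = (\<Sum>i=1..n. (\<sigma> i)\<^sup>2 * (q i)\<^sup>2)"
  let ?C = "two_sample_cov \<alpha> \<beta> p q"
  have "measure_pmf.variance (pair_pmf ?T ?T) (chi_paired n \<sigma> L R)
      = (\<Sum>i=1..n. \<Sum>j=1..n. \<sigma> i * \<sigma> j * (2 * d i * d j * ?C i j + (?C i j)\<^sup>2))"
    unfolding chi_paired_def \<alpha>_def \<beta>_def using p q L R
    by (intro variance_bilinear_iid)
      (simp_all add: finite_set_pmf_two_sample_pmf two_sample_pmf_def expectation_empirical_diff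
        expectation_empirical_diff_mult finite_set_pmf_sample_pmf finite_set_pmf_cat_pmf pmf_cat_pmf
        two_sample_cov_def d_def)
  also have "\<dots> = 2 * (\<Sum>i=1..n. \<Sum>j=1..n. \<sigma> i * \<sigma> j * d i * d j * ?C i j)
      + (\<Sum>i=1..n. \<Sum>j=1..n. \<sigma> i * \<sigma> j * (?C i j)\<^sup>2)"
    by (simp add: sum.distrib sum_distrib_left algebra_simps)
  also have "\<dots> \<le> 2 * (\<Sum>i=1..n. (\<sigma> i)\<^sup>2 * (d i)\<^sup>2 * (\<alpha> * p i + \<beta> * q i))
      + 2 * (\<alpha> + \<beta>) * (\<alpha> * Sp + \<beta> * Sq)"
  proof -
    have "0 \<le> \<alpha>" "0 \<le> \<beta>"
      by (simp_all add: \<alpha>_def \<beta>_def)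
    moreover have "\<And>i. i \<in> {1..n} \<Longrightarrow> 0 \<le> p i" "sum p {1..n} \<le> 1"
      and "\<And>i. i \<in> {1..n} \<Longrightarrow> 0 \<le> q i" "sum q {1..n} \<le> 1"
      using p q by (auto simp: prob_simplex_def)
    ultimately show ?thesis
      using two_sample_cov_quadratic_form_le[of "{1..n}" \<alpha> \<beta> \<sigma> d p q]
        two_sample_cov_square_sum_le[of "{1..n}" \<sigma> p q \<alpha> \<beta>] \<sigma>
      unfolding Sp_def Sq_def by fastforce
  qed
  also have "\<dots> = 4 / M * (\<Sum>i=1..n. (\<sigma> i)\<^sup>2 * (p i - q i)\<^sup>2 * (\<gamma> * p i + (1 - \<gamma>) * q i))
      + 8 / M\<^sup>2 * (\<gamma> * Sp + (1 - \<gamma>) * Sq)"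
  proof -
    have \<alpha>: "\<alpha> = 2 * \<gamma> / M" and \<beta>: "\<beta> = 2 * (1 - \<gamma>) / M"
      unfolding \<alpha>_def \<beta>_def \<gamma>_def M_def using inverse_sample_sizes[OF L R] by simp_all
    have "0 < M"
      using L R by (simp add: M_def)
    have "2 * (\<Sum>i=1..n. (\<sigma> i)\<^sup>2 * (d i)\<^sup>2 * (\<alpha> * p i + \<beta> * q i))
        = 4 / M * (\<Sum>i=1..n. (\<sigma> i)\<^sup>2 * (p i - q i)\<^sup>2 * (\<gamma> * p i + (1 - \<gamma>) * q i))"
      unfolding \<alpha> \<beta> d_def sum_distrib_left using \<open>0 < M\<close>
      by (intro sum.cong refl) (simp add: field_simps)
    moreover have "2 * (\<alpha> + \<beta>) * (\<alpha> * Sp + \<beta> * Sq) = 8 / M\<^sup>2 * (\<gamma> * Sp + (1 - \<gamma>) * Sq)"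
      unfolding \<alpha> \<beta> using \<open>0 < M\<close> by (simp add: power2_eq_square field_simps)
    ultimately show ?thesis
      by simp
  qed
  finally show ?thesis
    unfolding Sp_def Sq_def .
qed

lemma variance_bound_le_square:
  fixes M A B :: real
  assumes "0 < M" "0 \<le> A" "0 \<le> B"
  shows "4 / M * A + 8 / M\<^sup>2 * B \<le> (2 * sqrt 2 * ((1 / sqrt M) * sqrt A + (1 / M) * sqrt B))\<^sup>2"
proof -
  have "(2 * sqrt 2 * ((1 / sqrt M) * sqrt A + (1 / M) * sqrt B))\<^sup>2
      = 8 * (A / M + B / M\<^sup>2) + 16 * ((1 / sqrt M) * sqrt A) * ((1 / M) * sqrt B)"
    using assms by (simp add: power2_sum power_divide algebra_simps)
  moreover have "0 \<le> ((1 / sqrt M) * sqrt A) * ((1 / M) * sqrt B)"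
    using assms by simp
  moreover have "4 / M * A \<le> 8 * (A / M)"
    using assms by (simp add: field_simps)
  ultimately show ?thesis
    by simp
qed

theorem proposition1:
  fixes n L R :: nat and p q \<sigma> :: "nat \<Rightarrow> real" and l \<theta> \<gamma> \<gamma>b M :: real
  assumes p: "p \<in> prob_simplex n" and q: "q \<in> prob_simplex n"
    and \<sigma>: "\<forall>i\<in>{1..n}. \<sigma> i \<ge> 0"
    and L: "L > 0" and R: "R > 0"
    and \<gamma>_def: "\<gamma> = real R / (real L + real R)"
    and \<gamma>b_def: "\<gamma>b = 1 - \<gamma>"
    and M_def: "M = 2 * real L * real R / (real L + real R)"
    and \<theta>: "\<theta> \<ge> 1"
    and l: "l \<ge> 2 * sqrt 2 * \<theta> * (1 / M) * sqrt (\<Sum>i=1..n. (\<sigma> i)\<^sup>2 * (p i)\<^sup>2)"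
  shows "((\<forall>i\<in>{1..n}. p i = q i) \<longrightarrow> claim_prob n \<sigma> l L R p q \<le> 1 / \<theta>\<^sup>2)
       \<and> ((\<Sum>i=1..n. \<sigma> i * (p i - q i)\<^sup>2) > l + 2 * sqrt 2 * \<theta> *
             ((1 / sqrt M) * sqrt (\<Sum>i=1..n. (\<sigma> i)\<^sup>2 * (p i - q i)\<^sup>2 * (\<gamma> * p i + \<gamma>b * q i))
              + (1 / M) * sqrt (\<gamma> * (\<Sum>i=1..n. (\<sigma> i)\<^sup>2 * (p i)\<^sup>2)
                                + \<gamma>b * (\<Sum>i=1..n. (\<sigma> i)\<^sup>2 * (q i)\<^sup>2)))
          \<longrightarrow> claim_prob n \<sigma> l L R p q \<ge> 1 - 3 / \<theta>\<^sup>2)"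
proof -
  let ?P = "pair_pmf (two_sample_pmf n L R p q) (two_sample_pmf n L R p q)"
  let ?\<chi> = "chi_paired n \<sigma> L R"
  define Sp where "Sp = (\<Sum>i=1..n. (\<sigma> i)\<^sup>2 * (p i)\<^sup>2)"
  define Sq where "Sq = (\<Sum>i=1..n. (\<sigma> i)\<^sup>2 * (q i)\<^sup>2)"
  define A where "A = (\<Sum>i=1..n. (\<sigma> i)\<^sup>2 * (p i - q i)\<^sup>2 * (\<gamma> * p i + \<gamma>b * q i))"
  define c where "c = 2 * sqrt 2 * ((1 / sqrt M) * sqrt A + (1 / M) * sqrt (\<gamma> * Sp + \<gamma>b * Sq))"
  have fin: "finite (set_pmf ?P)"
    using p q by (simp add: finite_set_pmf_two_sample_pmf)
  have claim: "claim_prob n \<sigma> l L R p q = measure_pmf.prob ?P {z. l < \<bar>?\<chi> z\<bar>}"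
    by (rule claim_prob_eq_prob_chi_paired)
  have mean: "measure_pmf.expectation ?P ?\<chi> = (\<Sum>i=1..n. \<sigma> i * (p i - q i)\<^sup>2)"
    using p q L R by (rule expectation_chi_paired)
  have "0 < M" "0 < \<theta>"
    using L R \<theta> by (simp_all add: M_def)
  have "0 \<le> \<gamma>" "0 \<le> \<gamma>b"
    using L R by (auto simp: \<gamma>_def \<gamma>b_def field_simps)
  then have "0 \<le> A" "0 \<le> \<gamma> * Sp + \<gamma>b * Sq"
    using p q by (auto simp: A_def Sp_def Sq_def prob_simplex_def intro!: sum_nonneg add_nonneg_nonneg mult_nonneg_nonneg)
  then have "0 \<le> c" and var: "measure_pmf.variance ?P ?\<chi> \<le> c\<^sup>2"
    using \<open>0 < M\<close> variance_chi_paired_le[OF p q \<sigma> L R] variance_bound_le_square[of M A "\<gamma> * Sp + \<gamma>b * Sq"]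
    unfolding c_def A_def Sp_def Sq_def \<gamma>_def \<gamma>b_def M_def by simp_all
  show ?thesis
    unfolding A_def[symmetric] Sp_def[symmetric] Sq_def[symmetric] c_def[symmetric]
  proof (intro conjI impI)
    assume "\<forall>i\<in>{1..n}. p i = q i"
    then have c_eq: "c = 2 * sqrt 2 * (1 / M) * sqrt Sp" and "measure_pmf.expectation ?P ?\<chi> = 0"
      by (simp_all add: c_def A_def Sp_def Sq_def \<gamma>b_def mean algebra_simps)
    moreover have "\<theta> * c \<le> l"
      using l by (simp add: c_eq Sp_def mult_ac)
    ultimately show "claim_prob n \<sigma> l L R p q \<le> 1 / \<theta>\<^sup>2"
      unfolding claim using prob_abs_gt_le_of_expectation_zero[OF fin \<open>0 < \<theta>\<close> \<open>0 \<le> c\<close> _ var] by simp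
  next
    assume "(\<Sum>i=1..n. \<sigma> i * (p i - q i)\<^sup>2) > l + 2 * sqrt 2 * \<theta> *
      ((1 / sqrt M) * sqrt A + (1 / M) * sqrt (\<gamma> * Sp + \<gamma>b * Sq))"
    then have "l + \<theta> * c < measure_pmf.expectation ?P ?\<chi>"
      by (simp add: mean c_def mult_ac)
    then have "1 - 1 / \<theta>\<^sup>2 \<le> claim_prob n \<sigma> l L R p q"
      unfolding claim by (rule prob_abs_gt_ge_of_expectation_gt[OF fin \<open>0 < \<theta>\<close> \<open>0 \<le> c\<close> var])
    moreover have "1 / \<theta>\<^sup>2 \<le> 3 / \<theta>\<^sup>2"
      by (simp add: divide_right_mono)
    ultimately show "claim_prob n \<sigma> l L R p q \<ge> 1 - 3 / \<theta>\<^sup>2"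
      by linarith
  qed
qed

end
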